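(* Let $(i,j)\in J$ and let $a_{i,j}=\ell_{i,j}+f_{i,j}(\ell_{i,j}^* )$ be a strongly matricially free Toeplitz operator on $\mathcal{N}$, where $f_{i,j}(w)=\sum_{n=0}^{d}c_{i,j}(n)w^n$ is a polynomial with complex coefficients. Then the R-transform of the distribution $\mu_{i,j}$ of $a_{i,j}$ in the state $\varphi_{i,j}$ is $$R_{i,j}(z)=f_{i,j}(\alpha_{i,j}^2z),$$ where on the right $f_{i,j}$ is the scalar polynomial (constant term the complex number $c_{i,j}(0)$).
   Context: Fock space. Let $J\subseteq\{1,2\}\times\{1,2\}$, $(\alpha_{i,j})_{(i,j)\in J}$ positive reals, $\{e_{i,j}:(i,j)\in J\}$ orthonormal vectors and $\mathcal{F}$ the full Fock space over $\bigoplus_{(i,j)\in J}\mathbb{C}e_{i,j}$ with vacuum $\Omega$. The strongly matricially free Fock space $\mathcal{N}\subseteq\mathcal{F}$ is the closed span of $\Omega$ and all simple tensors $e_{i_1,i_2}^{\otimes n_1}\otimes e_{i_2,i_3}^{\otimes n_2}\otimes\dots\otimes e_{i_{m-1},i_m}^{\otimes n_{m-1}}\otimes e_{i_m,i_m}^{\otimes n_m}$ ($m\ge1$, $n_k\ge1$, $i_1\neq\dots\neq i_m$, all pairs in $J$). With $P$ the projection onto $\mathcal{N}$ and $\ell(e)w=e\otimes w$, set $\ell_{i,j}=\alpha_{i,j}P\ell(e_{i,j})|_{\mathcal{N}}$. Let $\mathcal{N}_{i,j}$ be the closed span of those simple tensors whose first factor is $e_{i,j}$; the internal unit $1_{j,j}$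 is the projection onto $\mathbb{C}\Omega\oplus\mathcal{N}_{j,j}$ and, for $i\neq j$, $1_{i,j}$ is the projection onto $\mathcal{N}\ominus(\mathbb{C}\Omega\oplus\mathcal{N}_{i,i})$. The state $\varphi_{i,j}$ on $B(\mathcal{N})$ is $x\mapsto\langle x\Omega_{i,j},\Omega_{i,j}\rangle$, where $\Omega_{j,j}=\Omega$ and $\Omega_{i,j}=e_{j,j}$ for $i\neq j$ (for off-diagonal $(i,j)$ it is understood that $(j,j)\in J$). The strongly matricially free Toeplitz operator is $a_{i,j}=\ell_{i,j}+f_{i,j}(\ell_{i,j}^* )$ with $f_{i,j}(\ell_{i,j}^* ):=c_{i,j}(0)1_{i,j}+\sum_{n\ge1}c_{i,j}(n)(\ell_{i,j}^* )^n$. The distribution of $x$ in a state $\omega$ is the sequence of moments $\omega(x^n)$; its Cauchy transform is $G(w)=\sum_{n\ge0}\omega(x^n)w^{-n-1}$ (for $|w|$ large) and its R-transform is the power series $R$, analytic near $0$, with $G(1/z+R(z))=z$ for small $|z|>0$. *)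

theory Defs
  imports Complex_Main
begin

text \<open>A simple tensor e_{p_1} (x) ... (x) e_{p_L} of the full Fock space is encoded by the word
  [p_1,...,p_L]; the empty word encodes the vacuum.  Vectors are coefficient functions
  on words; all operators below act coordinatewise, so they agree with the Hilbert space
  operators on finitely supported vectors (which is all that the moments involve).\<close>

type_synonym word = "(nat \<times> nat) list"
type_synonym vec = "word \<Rightarrow> complex"

definition blk :: "nat list \<Rightarrow> nat \<Rightarrow> nat \<times> nat" where
  "blk is k = (if Suc k < length is then (is ! k, is ! Suc k) else (is ! k, is ! k))"

text \<open>Basis words of the strongly matricially free Fock space N.\<close>
definition smf_word :: "(nat \<times> nat) set \<Rightarrow> word \<Rightarrow> bool" where
  "smf_word J w \<longleftrightarrow> w = [] \<or>
     (\<exists>is ns. is \<noteq> [] \<and> length ns = length is \<and> (\<forall>k<length ns. ns ! k \<ge> 1) \<and>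
        (\<forall>k. Suc k < length is \<longrightarrow> is ! k \<noteq> is ! Suc k) \<and>
        (\<forall>k<length is. blk is k \<in> J) \<and>
        w = concat (map (\<lambda>k. replicate (ns ! k) (blk is k)) [0..<length is]))"

text \<open>l_{i,j} = alpha_{i,j} P l(e_{i,j}) restricted to N.\<close>
definition smf_l :: "(nat \<times> nat) set \<Rightarrow> (nat \<times> nat \<Rightarrow> real) \<Rightarrow> nat \<Rightarrow> nat \<Rightarrow> vec \<Rightarrow> vec" where
  "smf_l J \<alpha> i j v = (\<lambda>w. if smf_word J w \<and> w \<noteq> [] \<and> hd w = (i, j)
                            then complex_of_real (\<alpha> (i, j)) * v (tl w) else 0)"

definition smf_lstar :: "(nat \<times> nat) set \<Rightarrow> (nat \<times> nat \<Rightarrow> real) \<Rightarrow> nat \<Rightarrow> nat \<Rightarrow> vec \<Rightarrow> vec" where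
  "smf_lstar J \<alpha> i j v = (\<lambda>w. if smf_word J w
                            then complex_of_real (\<alpha> (i, j)) * v ((i, j) # w) else 0)"

definition smf_unit :: "(nat \<times> nat) set \<Rightarrow> nat \<Rightarrow> nat \<Rightarrow> vec \<Rightarrow> vec" where
  "smf_unit J i j v = (\<lambda>w. if smf_word J w \<and>
        (if i = j then (w = [] \<or> hd w = (j, j)) else (w \<noteq> [] \<and> hd w \<noteq> (i, i)))
      then v w else 0)"

definition smf_toeplitz :: "(nat \<times> nat) set \<Rightarrow> (nat \<times> nat \<Rightarrow> real) \<Rightarrow> nat \<Rightarrow> nat \<Rightarrow>
    (nat \<Rightarrow> complex) \<Rightarrow> nat \<Rightarrow> vec \<Rightarrow> vec" where
  "smf_toeplitz J \<alpha> i j c d v = (\<lambda>w. smf_l J \<alpha> i j v w + c 0 * smf_unit J i j v w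
      + (\<Sum>n\<in>{1..d}. c n * ((smf_lstar J \<alpha> i j ^^ n) v) w))"

definition smf_vac :: "nat \<Rightarrow> nat \<Rightarrow> word" where
  "smf_vac i j = (if i = j then [] else [(j, j)])"

definition smf_state :: "nat \<Rightarrow> nat \<Rightarrow> (vec \<Rightarrow> vec) \<Rightarrow> complex" where
  "smf_state i j x = x (\<lambda>w. if w = smf_vac i j then 1 else 0) (smf_vac i j)"

definition smf_moment :: "(nat \<times> nat) set \<Rightarrow> (nat \<times> nat \<Rightarrow> real) \<Rightarrow> nat \<Rightarrow> nat \<Rightarrow>
    (nat \<Rightarrow> complex) \<Rightarrow> nat \<Rightarrow> nat \<Rightarrow> complex" where
  "smf_moment J \<alpha> i j c d n = smf_state i j (smf_toeplitz J \<alpha> i j c d ^^ n)"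

definition cauchy_series :: "(nat \<Rightarrow> complex) \<Rightarrow> complex \<Rightarrow> nat \<Rightarrow> complex" where
  "cauchy_series m w = (\<lambda>n. m n / w ^ Suc n)"

definition is_R_transform :: "(nat \<Rightarrow> complex) \<Rightarrow> (complex \<Rightarrow> complex) \<Rightarrow> bool" where
  "is_R_transform m R \<longleftrightarrow> (\<exists>\<epsilon>>0. \<forall>z. 0 < norm z \<and> norm z < \<epsilon> \<longrightarrow>
      cauchy_series m (1 / z + R z) sums z)"

end

theory Submission
  imports Defs
begin

text \<open>For small z the coherent vector \<open>\<omega> = \<Sum>\<^sub>m (\<alpha> z)\<^sup>m e\<^sub>i\<^sub>j\<^sup>m \<Omega>\<^sub>i\<^sub>j\<close> is an
  eigenvector of \<open>\<ell>\<^sup>*\<close> with eigenvalue \<open>\<alpha>\<^sup>2 z\<close>, is fixed by the internal unit, and satisfies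
  \<open>z \<ell> \<omega> = \<omega> - \<Omega>\<^sub>i\<^sub>j\<close>.  Hence, with \<open>w = 1/z + f(\<alpha>\<^sup>2 z)\<close>, we get
  \<open>\<Omega>\<^sub>i\<^sub>j = z (w \<omega> - a \<omega>)\<close>, so that \<open>\<phi>(a\<^sup>n) = z (w p\<^sub>n - p\<^sub>n\<^sub>+\<^sub>1)\<close> where \<open>p\<^sub>n\<close> is the
  \<open>\<Omega>\<^sub>i\<^sub>j\<close>-coefficient of \<open>a\<^sup>n \<omega>\<close>.  The Cauchy series at w therefore telescopes to \<open>z p\<^sub>0 = z\<close>,
  because \<open>|p\<^sub>n| \<le> C\<^sup>n\<close> for a sup-norm bound C of a, and \<open>|w| > C\<close> once z is small.\<close>

definition coherent_word :: "nat \<Rightarrow> nat \<Rightarrow> word \<Rightarrow> bool" where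
  "coherent_word i j u \<longleftrightarrow> (\<exists>m. u = replicate m (i, j) @ smf_vac i j)"

definition coherent_vec :: "nat \<Rightarrow> nat \<Rightarrow> complex \<Rightarrow> vec" where
  "coherent_vec i j q u =
     (if coherent_word i j u then q ^ (length u - length (smf_vac i j)) else 0)"

lemma coherent_word_vac [simp]: "coherent_word i j (smf_vac i j)"
  unfolding coherent_word_def by (metis append_Nil replicate_0)

lemma coherent_word_Cons_iff [simp]: "coherent_word i j ((i, j) # u) \<longleftrightarrow> coherent_word i j u"
proof
  assume "coherent_word i j ((i, j) # u)"
  then obtain m where m: "(i, j) # u = replicate m (i, j) @ smf_vac i j"
    unfolding coherent_word_def by blast
  then show "coherent_word i j u"
    unfolding coherent_word_def by (cases m) (auto simp: smf_vac_def split: if_splits)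
next
  assume "coherent_word i j u"
  then show "coherent_word i j ((i, j) # u)"
    unfolding coherent_word_def by (metis append_Cons replicate_Suc)
qed

lemma coherent_word_cases:
  assumes "coherent_word i j u"
  obtains "u = smf_vac i j" | u' where "u = (i, j) # u'" "coherent_word i j u'"
  using assms unfolding coherent_word_def
  by (metis append_Cons append_Nil not0_implies_Suc replicate_0 replicate_Suc)

lemma coherent_vec_vac [simp]: "coherent_vec i j q (smf_vac i j) = 1"
  by (simp add: coherent_vec_def)

lemma coherent_vec_Cons [simp]:
  "coherent_vec i j q ((i, j) # u) = q * coherent_vec i j q u"
proof (cases "coherent_word i j u")
  case True
  then have "length u \<ge> length (smf_vac i j)"
    unfolding coherent_word_def by auto
  with True show ?thesis
    by (simp add: coherent_vec_def Suc_diff_le)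
qed (simp add: coherent_vec_def)

lemma smf_word_coherent:
  assumes "(i, j) \<in> J" "i \<noteq> j \<longrightarrow> (j, j) \<in> J" "coherent_word i j u"
  shows "smf_word J u"
proof -
  obtain m where u: "u = replicate m (i, j) @ smf_vac i j"
    using assms(3) unfolding coherent_word_def by blast
  have upt2: "[0..<2] = [0, 1]" by (simp add: upt_rec)
  show ?thesis
  proof (cases "i = j"; cases m)
    assume "i = j" "m = 0"
    then show ?thesis using u by (simp add: smf_word_def smf_vac_def)
  next
    fix k assume "i = j" "m = Suc k"
    then show ?thesis unfolding smf_word_def
      by (intro disjI2 exI[of _ "[j]"] exI[of _ "[m]"])
         (use u assms in \<open>simp add: blk_def smf_vac_def\<close>)
  next
    assume "i \<noteq> j" "m = 0"
    then show ?thesis unfolding smf_word_def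
      by (intro disjI2 exI[of _ "[j]"] exI[of _ "[1]"])
         (use u assms in \<open>simp add: blk_def smf_vac_def\<close>)
  next
    fix k assume "i \<noteq> j" "m = Suc k"
    then show ?thesis unfolding smf_word_def
      by (intro disjI2 exI[of _ "[i, j]"] exI[of _ "[m, 1]"])
         (use u assms in \<open>auto simp add: blk_def smf_vac_def upt2 less_Suc_eq\<close>)
  qed
qed

context
  fixes J :: "(nat \<times> nat) set" and \<alpha> :: "nat \<times> nat \<Rightarrow> real" and i j :: nat
  assumes ij_in_J: "(i, j) \<in> J" and jj_in_J: "i \<noteq> j \<longrightarrow> (j, j) \<in> J"
begin

lemma smf_lstar_coherent:
  "smf_lstar J \<alpha> i j (coherent_vec i j q) = (\<lambda>u. of_real (\<alpha> (i, j)) * q * coherent_vec i j q u)"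
proof
  fix u
  show "smf_lstar J \<alpha> i j (coherent_vec i j q) u = of_real (\<alpha> (i, j)) * q * coherent_vec i j q u"
    using smf_word_coherent[OF ij_in_J jj_in_J, of u]
    by (cases "coherent_word i j u") (auto simp: smf_lstar_def coherent_vec_def[of i j q u])
qed

lemma smf_lstar_pow_coherent:
  "(smf_lstar J \<alpha> i j ^^ n) (coherent_vec i j q)
     = (\<lambda>u. (of_real (\<alpha> (i, j)) * q) ^ n * coherent_vec i j q u)"
proof (induction n)
  case (Suc n)
  have "smf_lstar J \<alpha> i j (\<lambda>u. a * v u) = (\<lambda>u. a * smf_lstar J \<alpha> i j v u)" for a v
    by (auto simp: smf_lstar_def)
  with Suc show ?case by (simp add: smf_lstar_coherent, simp add: mult_ac)
qed simp

lemma smf_unit_coherent: "smf_unit J i j (coherent_vec i j q) = coherent_vec i j q"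
proof
  fix u
  show "smf_unit J i j (coherent_vec i j q) u = coherent_vec i j q u"
  proof (cases "coherent_word i j u")
    case True
    then show ?thesis
      using smf_word_coherent[OF ij_in_J jj_in_J True]
      by (cases rule: coherent_word_cases) (auto simp: smf_unit_def smf_vac_def)
  qed (simp add: smf_unit_def coherent_vec_def)
qed

lemma smf_l_coherent:
  "z * smf_l J \<alpha> i j (coherent_vec i j (of_real (\<alpha> (i, j)) * z)) u
     = coherent_vec i j (of_real (\<alpha> (i, j)) * z) u - (if u = smf_vac i j then 1 else 0)"
proof (cases "coherent_word i j u")
  case True
  then show ?thesis
  proof (cases rule: coherent_word_cases)
    case 1
    have "smf_l J \<alpha> i j v (smf_vac i j) = 0" for v
      by (simp add: smf_l_def smf_vac_def)
    with 1 show ?thesis by simp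
  next
    case (2 u')
    then have "u \<noteq> smf_vac i j" by (auto simp: smf_vac_def)
    with 2 show ?thesis
      using smf_word_coherent[OF ij_in_J jj_in_J True] by (simp add: smf_l_def)
  qed
next
  case False
  then have "u \<noteq> smf_vac i j" by auto
  moreover have "\<not> coherent_word i j (tl u)" if "u \<noteq> []" "hd u = (i, j)"
    using False that by (metis coherent_word_Cons_iff list.collapse)
  ultimately show ?thesis
    using False by (auto simp: smf_l_def coherent_vec_def)
qed

lemma smf_toeplitz_coherent:
  "smf_toeplitz J \<alpha> i j c d (coherent_vec i j q) u
     = smf_l J \<alpha> i j (coherent_vec i j q) u
       + (\<Sum>n\<le>d. c n * (of_real (\<alpha> (i, j)) * q) ^ n) * coherent_vec i j q u"
proof -
  let ?k = "of_real (\<alpha> (i, j)) * q" and ?\<omega> = "coherent_vec i j q u"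
  have "(\<Sum>n\<le>d. c n * ?k ^ n) * ?\<omega> = c 0 * ?\<omega> + (\<Sum>n\<in>{1..d}. c n * (?k ^ n * ?\<omega>))"
    by (simp add: atMost_atLeast0 sum.atLeast_Suc_atMost distrib_right sum_distrib_right mult.assoc)
  then show ?thesis
    by (simp add: smf_toeplitz_def smf_unit_coherent smf_lstar_pow_coherent)
qed

lemma vac_eq_resolvent_coherent:
  fixes c :: "nat \<Rightarrow> complex" and d :: nat
  assumes "z \<noteq> 0"
  defines "q \<equiv> of_real (\<alpha> (i, j)) * z"
    and "w \<equiv> 1 / z + (\<Sum>n\<le>d. c n * (of_real ((\<alpha> (i, j))\<^sup>2) * z) ^ n)"
  shows "(\<lambda>u. if u = smf_vac i j then 1 else 0)
           = (\<lambda>u. z * (w * coherent_vec i j q u - smf_toeplitz J \<alpha> i j c d (coherent_vec i j q) u))"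
proof
  fix u
  let ?R = "\<Sum>n\<le>d. c n * (of_real ((\<alpha> (i, j))\<^sup>2) * z) ^ n"
    and ?\<omega> = "coherent_vec i j q u" and ?\<delta> = "if u = smf_vac i j then 1 else 0"
  have "of_real (\<alpha> (i, j)) * q = of_real ((\<alpha> (i, j))\<^sup>2) * z"
    unfolding q_def by (simp add: power2_eq_square)
  then have "smf_toeplitz J \<alpha> i j c d (coherent_vec i j q) u
      = smf_l J \<alpha> i j (coherent_vec i j q) u + ?R * ?\<omega>"
    by (simp add: smf_toeplitz_coherent)
  moreover have "z * smf_l J \<alpha> i j (coherent_vec i j q) u = ?\<omega> - ?\<delta>"
    unfolding q_def by (rule smf_l_coherent)
  moreover have "z * w = 1 + z * ?R"
    unfolding w_def using assms(1) by (simp add: field_simps)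
  ultimately show "?\<delta> = z * (w * ?\<omega> - smf_toeplitz J \<alpha> i j c d (coherent_vec i j q) u)"
    by (simp add: right_diff_distrib distrib_left mult.assoc[symmetric]) (simp add: algebra_simps)
qed

end

definition vec_linear :: "(vec \<Rightarrow> vec) \<Rightarrow> bool" where
  "vec_linear A \<longleftrightarrow> (\<forall>a b x y. A (\<lambda>u. a * x u + b * y u) = (\<lambda>u. a * A x u + b * A y u))"

lemma vec_linear_funpow: "vec_linear A \<Longrightarrow> vec_linear (A ^^ n)"
  by (induction n) (auto simp: vec_linear_def)

lemma vec_linear_smf_toeplitz: "vec_linear (smf_toeplitz J \<alpha> i j c d)"
proof -
  have lin: "vec_linear (smf_l J \<alpha> i j)" "vec_linear (smf_unit J i j)"
    "vec_linear (smf_lstar J \<alpha> i j)"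
    by (auto simp: vec_linear_def smf_l_def smf_unit_def smf_lstar_def algebra_simps)
  have app: "F (\<lambda>u. a * x u + b * y u) u = a * F x u + b * F y u" if "vec_linear F"
    for F and a b :: complex and x y u
    using that unfolding vec_linear_def by metis
  show ?thesis
    unfolding vec_linear_def smf_toeplitz_def
    by (simp add: app[OF lin(1)] app[OF lin(2)] app[OF vec_linear_funpow[OF lin(3)]] algebra_simps
        sum.distrib sum_distrib_left)
qed

definition bounded_vec :: "vec \<Rightarrow> real \<Rightarrow> bool" where
  "bounded_vec v M \<longleftrightarrow> (\<forall>u. norm (v u) \<le> M)"

lemma bounded_vec_nonneg: "bounded_vec v M \<Longrightarrow> 0 \<le> M"
  unfolding bounded_vec_def by (metis norm_ge_zero order_trans)

lemma bounded_vec_funpow: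
  assumes "\<And>v M. bounded_vec v M \<Longrightarrow> bounded_vec (A v) (C * M)" and "bounded_vec v M"
  shows "bounded_vec ((A ^^ n) v) (C ^ n * M)"
  using assms by (induction n) (auto simp: mult.assoc)

lemma bounded_vec_smf_lstar:
  "bounded_vec v M \<Longrightarrow> bounded_vec (smf_lstar J \<alpha> i j v) (\<bar>\<alpha> (i, j)\<bar> * M)"
  using bounded_vec_nonneg[of v M] unfolding bounded_vec_def smf_lstar_def
  by (auto simp: norm_mult intro: mult_left_mono)

lemma smf_toeplitz_bounded:
  obtains C where "C \<ge> 0"
    and "\<And>v M. bounded_vec v M \<Longrightarrow> bounded_vec (smf_toeplitz J \<alpha> i j c d v) (C * M)"
proof
  let ?a = "\<bar>\<alpha> (i, j)\<bar>"
  let ?C = "?a + norm (c 0) + (\<Sum>n\<in>{1..d}. norm (c n) * ?a ^ n)"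
  show "0 \<le> ?C"
    by (intro add_nonneg_nonneg sum_nonneg) auto
  fix v M
  assume v: "bounded_vec v M"
  show "bounded_vec (smf_toeplitz J \<alpha> i j c d v) (?C * M)"
    unfolding bounded_vec_def
  proof
    fix u
    have "norm (smf_l J \<alpha> i j v u) \<le> ?a * M"
      using v bounded_vec_nonneg[OF v] unfolding bounded_vec_def
      by (auto simp: smf_l_def norm_mult intro: mult_left_mono)
    moreover have "norm (c 0 * smf_unit J i j v u) \<le> norm (c 0) * M"
      using v bounded_vec_nonneg[OF v] unfolding bounded_vec_def
      by (auto simp: smf_unit_def norm_mult intro: mult_left_mono)
    moreover have "norm (\<Sum>n\<in>{1..d}. c n * (smf_lstar J \<alpha> i j ^^ n) v u)
                     \<le> (\<Sum>n\<in>{1..d}. norm (c n) * ?a ^ n) * M"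
    proof -
      have "norm ((smf_lstar J \<alpha> i j ^^ n) v u) \<le> ?a ^ n * M" for n
        using bounded_vec_funpow[where A = "smf_lstar J \<alpha> i j", OF bounded_vec_smf_lstar v]
        unfolding bounded_vec_def by blast
      then have "norm (\<Sum>n\<in>{1..d}. c n * (smf_lstar J \<alpha> i j ^^ n) v u)
                   \<le> (\<Sum>n\<in>{1..d}. norm (c n) * (?a ^ n * M))"
        by (intro order_trans[OF norm_sum] sum_mono) (simp add: norm_mult mult_left_mono)
      then show ?thesis by (simp add: sum_distrib_right mult.assoc)
    qed
    ultimately show "norm (smf_toeplitz J \<alpha> i j c d v u) \<le> ?C * M"
      unfolding smf_toeplitz_def distrib_right
      by (smt (verit) norm_triangle_ineq)
  qed
qed

lemma resolvent_moment_series_sums: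
  fixes A :: "vec \<Rightarrow> vec" and C :: real
  assumes "vec_linear A"
    and \<delta>: "\<delta> = (\<lambda>u. z * (w * x u - A x u))"
    and bound: "\<And>n. norm ((A ^^ n) x u\<^sub>0) \<le> C ^ n"
    and "0 \<le> C" "C < norm w"
  shows "(\<lambda>n. (A ^^ n) \<delta> u\<^sub>0 / w ^ Suc n) sums (z * x u\<^sub>0)"
proof -
  define f where "f n = z * (A ^^ n) x u\<^sub>0 / w ^ n" for n
  have "w \<noteq> 0" using assms(4,5) by auto
  have "(A ^^ n) \<delta> u\<^sub>0 = z * w * (A ^^ n) x u\<^sub>0 - z * (A ^^ Suc n) x u\<^sub>0" for n
  proof -
    have "(A ^^ n) \<delta> = (A ^^ n) (\<lambda>u. (z * w) * x u + (- z) * A x u)"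
      unfolding \<delta> by (simp add: algebra_simps)
    also have "\<dots> = (\<lambda>u. (z * w) * (A ^^ n) x u + (- z) * (A ^^ n) (A x) u)"
      using vec_linear_funpow[OF assms(1), of n] unfolding vec_linear_def by blast
    finally show ?thesis unfolding funpow_Suc_right comp_def by simp
  qed
  then have terms: "(\<lambda>n. (A ^^ n) \<delta> u\<^sub>0 / w ^ Suc n) = (\<lambda>n. f n - f (Suc n))"
    using \<open>w \<noteq> 0\<close> by (auto simp: f_def field_simps)
  have geometric: "(\<lambda>n. (C / norm w) ^ n) \<longlonglongrightarrow> 0"
    using assms(4,5) by (intro LIMSEQ_power_zero) (simp add: divide_less_eq)
  have f_bound: "norm (f n) \<le> norm ((C / norm w) ^ n) * norm z" for n
  proof -
    have "norm (f n) = norm z * (norm ((A ^^ n) x u\<^sub>0) / norm w ^ n)"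
      by (simp add: f_def norm_mult norm_divide norm_power)
    also have "\<dots> \<le> norm z * (C ^ n / norm w ^ n)"
      by (intro mult_left_mono divide_right_mono bound) auto
    finally show ?thesis
      using assms(4) by (simp add: power_divide mult.commute)
  qed
  have "f \<longlonglongrightarrow> 0"
    using tendsto_0_le[OF geometric always_eventually[OF allI[OF f_bound]]] .
  then have "(\<lambda>n. f n - f (Suc n)) sums (f 0 - 0)"
    by (rule telescope_sums')
  moreover have "f 0 = z * x u\<^sub>0"
    by (simp add: f_def)
  ultimately show ?thesis
    unfolding terms by simp
qed

lemma smf_moment_cauchy_series_sums:
  fixes c :: "nat \<Rightarrow> complex" and C :: real
  assumes "(i, j) \<in> J" "i \<noteq> j \<longrightarrow> (j, j) \<in> J"
    and A_bounded: "\<And>v M. bounded_vec v M \<Longrightarrow> bounded_vec (smf_toeplitz J \<alpha> i j c d v) (C * M)"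
    and "0 \<le> C" "z \<noteq> 0" "norm (of_real (\<alpha> (i, j)) * z) \<le> 1"
    and C_less: "C < norm (1 / z + (\<Sum>n\<le>d. c n * (of_real ((\<alpha> (i, j))\<^sup>2) * z) ^ n))"
  shows "cauchy_series (smf_moment J \<alpha> i j c d)
           (1 / z + (\<Sum>n\<le>d. c n * (of_real ((\<alpha> (i, j))\<^sup>2) * z) ^ n)) sums z"
proof -
  let ?\<omega> = "coherent_vec i j (of_real (\<alpha> (i, j)) * z)"
  have "bounded_vec ?\<omega> 1"
    using assms(6) by (simp add: bounded_vec_def coherent_vec_def norm_power power_le_one)
  from bounded_vec_funpow[OF A_bounded this]
  have "norm ((smf_toeplitz J \<alpha> i j c d ^^ n) ?\<omega> (smf_vac i j)) \<le> C ^ n" for n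
    by (simp add: bounded_vec_def)
  from resolvent_moment_series_sums[OF vec_linear_smf_toeplitz
      vac_eq_resolvent_coherent[OF assms(1,2,5)] this \<open>0 \<le> C\<close> C_less]
  show ?thesis
    by (simp add: cauchy_series_def smf_moment_def smf_state_def)
qed

lemma eventually_norm_inverse_add_gt:
  fixes g :: "complex \<Rightarrow> complex"
  assumes "(g \<longlongrightarrow> L) (at 0)"
  shows "\<forall>\<^sub>F z in at 0. C < norm (1 / z + g z)"
proof -
  have "filterlim (\<lambda>z. inverse z + g z) at_infinity (at 0)"
    using filterlim_inverse_at_infinity assms by (rule tendsto_add_filterlim_at_infinity')
  then have "\<forall>\<^sub>F z in at 0. \<bar>C\<bar> + 1 \<le> norm (inverse z + g z)"
    by (simp add: filterlim_at_infinity[OF order_refl])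
  then show ?thesis
    by eventually_elim (simp add: divide_inverse)
qed

lemma is_R_transformI:
  assumes "\<forall>\<^sub>F z in at 0. cauchy_series m (1 / z + R z) sums z"
  shows "is_R_transform m R"
  using assms unfolding is_R_transform_def eventually_at by (auto simp: dist_norm)

theorem proposition4p1:
  fixes J :: "(nat \<times> nat) set" and \<alpha> :: "nat \<times> nat \<Rightarrow> real"
    and i j d :: nat and c :: "nat \<Rightarrow> complex"
  assumes "J \<subseteq> {1, 2} \<times> {1, 2}"
    and "\<forall>p\<in>J. \<alpha> p > 0"
    and "(i, j) \<in> J"
    and "i \<noteq> j \<longrightarrow> (j, j) \<in> J"
  shows "is_R_transform (smf_moment J \<alpha> i j c d)
           (\<lambda>z. \<Sum>n\<le>d. c n * (complex_of_real ((\<alpha> (i, j))\<^sup>2) * z) ^ n)"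
proof (rule is_R_transformI)
  let ?R = "\<lambda>z. \<Sum>n\<le>d. c n * (complex_of_real ((\<alpha> (i, j))\<^sup>2) * z) ^ n"
  obtain C where "C \<ge> 0"
    and A_bounded: "\<And>v M. bounded_vec v M \<Longrightarrow> bounded_vec (smf_toeplitz J \<alpha> i j c d v) (C * M)"
    using smf_toeplitz_bounded[of J \<alpha> i j c d] by blast
  have "((\<lambda>z. norm (of_real (\<alpha> (i, j)) * z)) \<longlongrightarrow> 0) (at (0 :: complex))"
    by (intro tendsto_norm_zero tendsto_mult_right_zero tendsto_ident_at)
  then have "\<forall>\<^sub>F z in at 0. norm (of_real (\<alpha> (i, j)) * z :: complex) < 1"
    by (rule order_tendstoD) simp
  moreover have "isCont ?R 0"
    by (intro continuous_intros)
  then have "\<forall>\<^sub>F z in at 0. C < norm (1 / z + ?R z)"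
    unfolding isCont_def by (rule eventually_norm_inverse_add_gt)
  ultimately show "\<forall>\<^sub>F z in at 0. cauchy_series (smf_moment J \<alpha> i j c d) (1 / z + ?R z) sums z"
    using eventually_neq_at_within[of 0 0]
    by eventually_elim (rule smf_moment_cauchy_series_sums[OF assms(3,4) A_bounded \<open>C \<ge> 0\<close>]; simp)
qed

end
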